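(* Let $X$ and $Y$ be (discrete) real random variables on a common probability space such that $\mathbb E[X]=0$, $\mathbb E[Y^2]\le1$, $\mathbb E[XY]=\beta>0$, and $X$ is sub-Gaussian with parameter $c>0$, i.e. $\Pr(|X|\ge t)\le 2e^{-t^2/c^2}$ for all $t\ge0$. Then \[ I(X;Y)=\tilde\Omega\!\left(\frac{\beta^4}{c^4}\right);\] more precisely, there is an absolute constant $C>0$ such that $\sqrt{I(X;Y)}\ge \dfrac{C\,\beta^2}{c^2\ln\!\big(2^{20}c^2/\beta^2\big)}$ (the paper obtains $C=\frac{1}{192\sqrt2}$).
   Context: $I(X;Y)=\mathbb E_Y[\mathrm{KL}(P_{X\mid Y}\,\|\,P_X)]$ is the mutual information (natural logarithm), with $\mathrm{KL}(P_1\|P_2)=\sum_x P_1(x)\ln\frac{P_1(x)}{P_2(x)}$. $\tilde\Omega$ hides absolute constants and factors polylogarithmic in $c/\beta$. *)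

theory Defs
  imports "HOL-Probability.Probability"
begin

text \<open>Summand of the Kullback-Leibler divergence (natural logarithm), written in the
  standard nonnegative form p ln(p/q) - p + q (whose sum over x equals
  sum p ln(p/q), since both pmfs sum to 1), with the conventions 0 ln(0/q) = 0 and
  p ln(p/0) = infinity for p > 0.  This makes the countable sum well defined in [0, infinity].\<close>
definition kl_term :: "real \<Rightarrow> real \<Rightarrow> ennreal" where
  "kl_term p q = (if p = 0 then ennreal q
                  else if q = 0 then \<infinity>
                  else ennreal (p * ln (p / q) - p + q))"

definition KL_pmf :: "'a pmf \<Rightarrow> 'a pmf \<Rightarrow> ennreal" where
  "KL_pmf P1 P2 = (\<integral>\<^sup>+ x. kl_term (pmf P1 x) (pmf P2 x) \<partial>count_space UNIV)"

definition cond_fst :: "('a \<times> 'b) pmf \<Rightarrow> 'b \<Rightarrow> 'a pmf" where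
  "cond_fst P y = map_pmf fst (cond_pmf P {z. snd z = y})"

definition mutual_info :: "('a \<times> 'b) pmf \<Rightarrow> ennreal" where
  "mutual_info P = (\<integral>\<^sup>+ y. KL_pmf (cond_fst P y) (map_pmf fst P) \<partial>measure_pmf (map_pmf snd P))"

end

theory Submission
  imports Defs
begin

text \<open>Let \<open>\<rho>\<close> be the density of the joint law \<open>P\<close> of \<open>(X, Y)\<close> with respect to the product \<open>R\<close> of
  its marginals.  Since the KL divergence dominates the squared Hellinger distance,
  \<open>I(X;Y) \<ge> \<integral>(\<surd>\<rho> - 1)\<^sup>2 dR\<close>, and writing \<open>\<rho> - 1 = (\<surd>\<rho> - 1)(\<surd>\<rho> + 1)\<close> Cauchy-Schwarz gives
  \<open>|E\<^sub>P h - E\<^sub>R h| \<le> 2 \<surd>I \<surd>B\<close> whenever \<open>E\<^sub>P h\<^sup>2, E\<^sub>R h\<^sup>2 \<le> B\<close>.  Apply this to \<open>h = X\<^sub>T Y\<close>, where \<open>X\<^sub>T = trunc T X\<close> is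
  \<open>X\<close> cut off at level \<open>T\<close>: under \<open>R\<close> the variables are independent, so \<open>E\<^sub>R h = E[X\<^sub>T] E[Y]\<close>, which
  is small because \<open>E X = 0\<close>; the sub-Gaussian tail makes \<open>E[(X - X\<^sub>T)\<^sup>2]\<close> tiny.  Choosing
  \<open>T = c (2 ln (2\<^sup>2\<^sup>0 c\<^sup>2/\<beta>\<^sup>2))\<^sup>1\<^sup>/\<^sup>2\<close> leaves \<open>\<beta> \<le> 4 T \<surd>I\<close>, and \<open>\<beta> \<le> 2\<surd>2 c\<close> turns this into the claim.\<close>

definition prod_marginals :: "('a \<times> 'b) pmf \<Rightarrow> ('a \<times> 'b) pmf" where
  "prod_marginals P = pair_pmf (map_pmf fst P) (map_pmf snd P)"

text \<open>The density \<open>\<rho> = dP / d(P\<^sub>X \<otimes> P\<^sub>Y)\<close>.  Where the product has no mass neither has \<open>P\<close>,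
  so the junk value \<open>0 / 0 = 0\<close> is harmless.\<close>
definition marginals_ratio :: "('a \<times> 'b) pmf \<Rightarrow> 'a \<times> 'b \<Rightarrow> real" where
  "marginals_ratio P z = pmf P z / pmf (prod_marginals P) z"

lemma pmf_le_pmf_map_fst: "pmf P (x, y) \<le> pmf (map_pmf fst P) x"
proof -
  have "pmf P (x, y) = measure P {(x, y)}" by (simp add: measure_pmf_single)
  also have "\<dots> \<le> measure P (fst -` {x})"
    by (intro measure_pmf.finite_measure_mono) auto
  finally show ?thesis by (simp add: pmf_map)
qed

lemma pmf_le_pmf_map_snd: "pmf P (x, y) \<le> pmf (map_pmf snd P) y"
proof -
  have "pmf P (x, y) = measure P {(x, y)}" by (simp add: measure_pmf_single)
  also have "\<dots> \<le> measure P (snd -` {y})"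
    by (intro measure_pmf.finite_measure_mono) auto
  finally show ?thesis by (simp add: pmf_map)
qed

lemma pmf_cond_fst:
  fixes P :: "('a \<times> 'b) pmf"
  assumes "y \<in> set_pmf (map_pmf snd P)"
  shows "pmf (cond_fst P y) x = pmf P (x, y) / pmf (map_pmf snd P) y"
proof -
  define S :: "('a \<times> 'b) set" where "S = {z. snd z = y}"
  define Q where "Q = cond_pmf P S"
  have ne: "set_pmf P \<inter> S \<noteq> {}" using assms by (auto simp: S_def)
  then have set_Q: "set_pmf Q = set_pmf P \<inter> S" by (simp add: Q_def)
  have "pmf (cond_fst P y) x = measure Q (fst -` {x} \<inter> set_pmf Q)"
    by (simp add: cond_fst_def pmf_map Q_def S_def measure_Int_set_pmf)
  also have "fst -` {x} \<inter> set_pmf Q = {(x, y)} \<inter> set_pmf Q"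
    using set_Q by (auto simp: S_def)
  also have "measure Q \<dots> = pmf P (x, y) / measure P S"
    using pmf_cond[OF ne, of "(x, y)"] by (simp add: measure_Int_set_pmf measure_pmf_single Q_def S_def)
  also have "measure P S = pmf (map_pmf snd P) y"
    by (simp add: pmf_map S_def vimage_def)
  finally show ?thesis .
qed

lemma pmf_prod_marginals_eq_0:
  assumes "pmf (prod_marginals P) z = 0"
  shows "pmf P z = 0"
proof -
  obtain x y where z: "z = (x, y)" by (cases z)
  with assms have "pmf (map_pmf fst P) x = 0 \<or> pmf (map_pmf snd P) y = 0"
    by (simp add: prod_marginals_def pmf_pair)
  then show ?thesis
    using pmf_le_pmf_map_fst[of P x y] pmf_le_pmf_map_snd[of P x y] pmf_nonneg[of P z]
    by (auto simp: z)
qed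

lemma marginals_ratio_nonneg: "marginals_ratio P z \<ge> 0"
  by (simp add: marginals_ratio_def)

lemma measure_pmf_eq_density_prod_marginals:
  "measure_pmf P = density (prod_marginals P) (\<lambda>z. ennreal (marginals_ratio P z))"
proof -
  have ratio: "pmf (prod_marginals P) z * marginals_ratio P z = pmf P z" for z
    using pmf_prod_marginals_eq_0[of P z] by (cases "pmf (prod_marginals P) z = 0") (auto simp: marginals_ratio_def)
  have "density (prod_marginals P) (\<lambda>z. ennreal (marginals_ratio P z))
      = density (count_space UNIV) (\<lambda>z. ennreal (pmf (prod_marginals P) z) * ennreal (marginals_ratio P z))"
    by (simp add: measure_pmf_eq_density density_density_eq)
  also have "\<dots> = density (count_space UNIV) (\<lambda>z. ennreal (pmf P z))"
    by (simp add: ennreal_mult'[symmetric] marginals_ratio_nonneg ratio)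
  finally show ?thesis by (simp add: measure_pmf_eq_density)
qed

lemma nn_integral_prod_marginals_snd:
  "(\<integral>\<^sup>+z. f (snd z) \<partial>prod_marginals P) = (\<integral>\<^sup>+z. f (snd z) \<partial>P)"
proof -
  have "(\<integral>\<^sup>+z. f (snd z) \<partial>prod_marginals P) = (\<integral>\<^sup>+y. f y \<partial>map_pmf snd (prod_marginals P))"
    by simp
  then show ?thesis by (simp add: prod_marginals_def map_snd_pair_pmf)
qed

section \<open>Mutual information dominates the Hellinger distance\<close>

lemma kl_term_scale:
  assumes "b > 0" "a \<ge> 0"
  shows "kl_term a b = ennreal b * kl_term (a / b) 1"
proof (cases "a = 0")
  case False
  have "b * (a / b * ln (a / b) - a / b + 1) = a * ln (a / b) - a + b"
    using assms by (simp add: field_simps)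
  then show ?thesis
    using False assms by (simp add: kl_term_def ennreal_mult'[symmetric])
qed (simp add: kl_term_def)

lemma sq_sqrt_minus_one_le_kl_term:
  assumes "a \<ge> 0"
  shows "ennreal ((sqrt a - 1)\<^sup>2) \<le> kl_term a 1"
proof (cases "a = 0")
  case False
  define s where "s = sqrt a"
  have s: "s > 0" "a = s\<^sup>2" using assms False by (auto simp: s_def)
  \<comment> \<open>\<open>ln s \<ge> 1 - 1/s\<close> gives \<open>s\<^sup>2 ln (s\<^sup>2) - s\<^sup>2 + 1 \<ge> 2s(s - 1) - s\<^sup>2 + 1 = (s - 1)\<^sup>2\<close>\<close>
  have "ln (1 / s) \<le> 1 / s - 1" using s by (intro ln_le_minus_one) auto
  then have "s * (1 - 1 / s) \<le> s * ln s" using s by (intro mult_left_mono) (auto simp: ln_div)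
  moreover have "s * (1 - 1 / s) = s - 1" using s by (simp add: field_simps)
  ultimately have "s - 1 \<le> s * ln s" by simp
  then have "s * (s - 1) \<le> s * (s * ln s)" using s by (intro mult_left_mono) auto
  moreover have "ln a = 2 * ln s" using s by (simp add: ln_powr[symmetric] powr_numeral)
  ultimately have "(sqrt a - 1)\<^sup>2 \<le> a * ln (a / 1) - a + 1"
    using s by (simp add: s_def[symmetric] power2_eq_square algebra_simps)
  then show ?thesis using False by (simp add: kl_term_def ennreal_leI)
qed (simp add: kl_term_def)

lemma mutual_info_eq_nn_integral_kl_term:
  "mutual_info P = (\<integral>\<^sup>+z. kl_term (marginals_ratio P z) 1 \<partial>prod_marginals P)"
proof -
  define PX where "PX = map_pmf fst P"
  define PY where "PY = map_pmf snd P"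
  define G where "G = (\<lambda>x y. kl_term (marginals_ratio P (x, y)) 1)"
  have ratio: "marginals_ratio P (x, y) = pmf P (x, y) / pmf PX x / pmf PY y" for x y
    by (simp add: marginals_ratio_def prod_marginals_def pmf_pair PX_def PY_def)
  have KL_cond: "KL_pmf (cond_fst P y) PX = (\<integral>\<^sup>+x. G x y \<partial>PX)" if "y \<in> set_pmf PY" for y
  proof -
    have pY: "pmf PY y > 0" using that by (simp add: pmf_positive)
    have "kl_term (pmf P (x, y) / pmf PY y) (pmf PX x) = ennreal (pmf PX x) * G x y" for x
    proof (cases "pmf PX x = 0")
      case True
      then have "pmf P (x, y) = 0" using pmf_le_pmf_map_fst[of P x y] by (simp add: PX_def)
      then show ?thesis using True by (simp add: kl_term_def)
    next
      case False
      then show ?thesis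
        using pY by (subst kl_term_scale) (auto simp: G_def ratio field_simps order_le_neq_trans)
    qed
    then have "KL_pmf (cond_fst P y) PX = (\<integral>\<^sup>+x. ennreal (pmf PX x) * G x y \<partial>count_space UNIV)"
      unfolding KL_pmf_def using pmf_cond_fst[of y P] that by (simp add: PY_def)
    then show ?thesis by (simp add: nn_integral_measure_pmf)
  qed
  have "mutual_info P = (\<integral>\<^sup>+y. \<integral>\<^sup>+x. G x y \<partial>PX \<partial>PY)"
    unfolding mutual_info_def PX_def[symmetric] PY_def[symmetric]
    by (intro nn_integral_cong_AE) (auto simp: AE_measure_pmf_iff KL_cond)
  also have "\<dots> = (\<integral>\<^sup>+w. G (snd w) (fst w) \<partial>pair_pmf PY PX)"
    by (simp add: nn_integral_pair_pmf')
  also have "\<dots> = (\<integral>\<^sup>+z. G (fst z) (snd z) \<partial>pair_pmf PX PY)"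
    by (subst pair_commute_pmf[of PX PY]) (simp add: case_prod_beta)
  finally show ?thesis by (simp add: G_def PX_def PY_def prod_marginals_def)
qed

lemma nn_integral_hellinger_le_mutual_info:
  "(\<integral>\<^sup>+z. ennreal ((sqrt (marginals_ratio P z) - 1)\<^sup>2) \<partial>prod_marginals P) \<le> mutual_info P"
  unfolding mutual_info_eq_nn_integral_kl_term
  by (intro nn_integral_mono sq_sqrt_minus_one_le_kl_term marginals_ratio_nonneg)

section \<open>Decoupling bound\<close>

lemma has_bochner_integral_pair_pmf_mult_nonneg:
  fixes a b :: "_ \<Rightarrow> real"
  assumes "integrable (measure_pmf A) a" "integrable (measure_pmf B) b" "\<And>x. a x \<ge> 0" "\<And>y. b y \<ge> 0"
  shows "has_bochner_integral (pair_pmf A B) (\<lambda>z. a (fst z) * b (snd z)) ((\<integral>x. a x \<partial>A) * (\<integral>y. b y \<partial>B))"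
proof (rule has_bochner_integral_nn_integral)
  have "(\<integral>\<^sup>+z. ennreal (a (fst z) * b (snd z)) \<partial>pair_pmf A B)
      = (\<integral>\<^sup>+x. ennreal (a x) * (\<integral>\<^sup>+y. ennreal (b y) \<partial>B) \<partial>A)"
    using assms by (simp add: nn_integral_pair_pmf' ennreal_mult nn_integral_cmult)
  also have "\<dots> = (\<integral>\<^sup>+x. ennreal (a x) \<partial>A) * (\<integral>\<^sup>+y. ennreal (b y) \<partial>B)"
    by (simp add: nn_integral_multc)
  also have "\<dots> = ennreal ((\<integral>x. a x \<partial>A) * (\<integral>y. b y \<partial>B))"
    using assms by (simp add: nn_integral_eq_integral ennreal_mult integral_nonneg_AE)
  finally show "(\<integral>\<^sup>+z. ennreal (a (fst z) * b (snd z)) \<partial>pair_pmf A B) = ennreal ((\<integral>x. a x \<partial>A) * (\<integral>y. b y \<partial>B))" .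
qed (use assms in \<open>auto simp: integral_nonneg_AE\<close>)

lemma has_bochner_integral_pair_pmf_mult:
  fixes a b :: "_ \<Rightarrow> real"
  assumes a: "integrable (measure_pmf A) a" and b: "integrable (measure_pmf B) b"
  shows "has_bochner_integral (pair_pmf A B) (\<lambda>z. a (fst z) * b (snd z)) ((\<integral>x. a x \<partial>A) * (\<integral>y. b y \<partial>B))"
proof -
  define ap where "ap = (\<lambda>x. max (a x) 0)"
  define an where "an = (\<lambda>x. max (- a x) 0)"
  define bp where "bp = (\<lambda>y. max (b y) 0)"
  define bn where "bn = (\<lambda>y. max (- b y) 0)"
  have int: "integrable A ap" "integrable A an" "integrable B bp" "integrable B bn"
    using a b by (auto simp: ap_def an_def bp_def bn_def)
  have nonneg: "ap x \<ge> 0" "an x \<ge> 0" "bp y \<ge> 0" "bn y \<ge> 0" for x y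
    by (auto simp: ap_def an_def bp_def bn_def)
  have split: "a x = ap x - an x" "b y = bp y - bn y" for x y
    by (auto simp: ap_def an_def bp_def bn_def)
  note parts = has_bochner_integral_pair_pmf_mult_nonneg[OF int(1,3) nonneg(1,3)]
    has_bochner_integral_pair_pmf_mult_nonneg[OF int(1,4) nonneg(1,4)]
    has_bochner_integral_pair_pmf_mult_nonneg[OF int(2,3) nonneg(2,3)]
    has_bochner_integral_pair_pmf_mult_nonneg[OF int(2,4) nonneg(2,4)]
  show ?thesis
    using has_bochner_integral_add[OF has_bochner_integral_diff[OF has_bochner_integral_diff[OF parts(1,2)] parts(3)] parts(4)]
    by (rule has_bochner_integral_cong[THEN iffD1, rotated -1])
       (auto simp: split int algebra_simps)
qed

lemma abs_integral_mult_le_sqrt: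
  fixes u v :: "_ \<Rightarrow> real"
  assumes [measurable]: "u \<in> borel_measurable M" "v \<in> borel_measurable M"
    and u: "(\<integral>\<^sup>+x. ennreal ((u x)\<^sup>2) \<partial>M) \<le> ennreal A"
    and v: "(\<integral>\<^sup>+x. ennreal ((v x)\<^sup>2) \<partial>M) \<le> ennreal B"
    and "A \<ge> 0" "B \<ge> 0"
  shows "\<bar>\<integral>x. u x * v x \<partial>M\<bar> \<le> sqrt A * sqrt B"
proof (cases "integrable M (\<lambda>x. u x * v x)")
  case True
  have "ennreal \<bar>\<integral>x. u x * v x \<partial>M\<bar> \<le> (\<integral>\<^sup>+x. ennreal \<bar>u x\<bar> * ennreal \<bar>v x\<bar> \<partial>M)"
    using integral_norm_bound_ennreal[OF True] by (simp add: abs_mult ennreal_mult)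
  then have "(ennreal \<bar>\<integral>x. u x * v x \<partial>M\<bar>)\<^sup>2 \<le> (\<integral>\<^sup>+x. ennreal \<bar>u x\<bar> * ennreal \<bar>v x\<bar> \<partial>M)\<^sup>2"
    by (intro power_mono) auto
  also have "\<dots> \<le> (\<integral>\<^sup>+x. (ennreal \<bar>u x\<bar>)\<^sup>2 \<partial>M) * (\<integral>\<^sup>+x. (ennreal \<bar>v x\<bar>)\<^sup>2 \<partial>M)"
    by (intro Cauchy_Schwarz_nn_integral) auto
  also have "\<dots> \<le> ennreal A * ennreal B"
    using u v by (intro mult_mono) (auto simp: ennreal_power)
  finally have "\<bar>\<integral>x. u x * v x \<partial>M\<bar>\<^sup>2 \<le> A * B"
    using assms by (simp add: ennreal_power ennreal_mult[symmetric] ennreal_le_iff)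
  then show ?thesis by (metis power2_abs real_le_rsqrt real_sqrt_mult)
qed (use assms in \<open>simp add: not_integrable_integral_eq\<close>)

lemma nn_integral_le_of_integral_le:
  fixes f :: "'a \<Rightarrow> real"
  assumes "integrable M f" "\<And>x. f x \<ge> 0" "(\<integral>x. f x \<partial>M) \<le> B"
  shows "(\<integral>\<^sup>+x. ennreal (f x) \<partial>M) \<le> ennreal B"
  using assms by (simp add: nn_integral_eq_integral ennreal_leI)

lemma integral_diff_prod_marginals_eq:
  fixes P :: "('a \<times> 'b) pmf" and h :: "'a \<times> 'b \<Rightarrow> real"
  defines "\<rho> \<equiv> marginals_ratio P"
  assumes int_P: "integrable P h" and int_R: "integrable (prod_marginals P) h"
  shows "(\<integral>z. h z \<partial>P) - (\<integral>z. h z \<partial>prod_marginals P)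
    = (\<integral>z. (sqrt (\<rho> z) - 1) * ((sqrt (\<rho> z) + 1) * h z) \<partial>prod_marginals P)"
proof -
  have \<rho>_nonneg: "\<rho> z \<ge> 0" for z by (simp add: \<rho>_def marginals_ratio_nonneg)
  have P_eq: "measure_pmf P = density (prod_marginals P) (\<lambda>z. ennreal (\<rho> z))"
    unfolding \<rho>_def by (rule measure_pmf_eq_density_prod_marginals)
  have "integrable (density (prod_marginals P) (\<lambda>z. ennreal (\<rho> z))) h" using int_P by (simp add: P_eq)
  then have int_\<rho>h: "integrable (prod_marginals P) (\<lambda>z. \<rho> z * h z)"
    by (subst (asm) integrable_density) (auto simp: \<rho>_nonneg)
  have "(\<integral>z. h z \<partial>P) = (\<integral>z. \<rho> z * h z \<partial>prod_marginals P)"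
    by (subst P_eq, subst integral_density) (auto simp: \<rho>_nonneg)
  moreover have "\<rho> z * h z - h z = (sqrt (\<rho> z) - 1) * ((sqrt (\<rho> z) + 1) * h z)" for z
    using \<rho>_nonneg[of z] by (simp add: algebra_simps)
  ultimately show ?thesis
    using int_\<rho>h int_R by (simp add: Bochner_Integration.integral_diff[symmetric])
qed

lemma nn_integral_sq_sqrt_marginals_ratio_mult_le:
  fixes P :: "('a \<times> 'b) pmf" and h :: "'a \<times> 'b \<Rightarrow> real"
  defines "\<rho> \<equiv> marginals_ratio P"
  shows "(\<integral>\<^sup>+z. ennreal (((sqrt (\<rho> z) + 1) * h z)\<^sup>2) \<partial>prod_marginals P)
    \<le> 2 * ((\<integral>\<^sup>+z. ennreal ((h z)\<^sup>2) \<partial>P) + (\<integral>\<^sup>+z. ennreal ((h z)\<^sup>2) \<partial>prod_marginals P))"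
proof -
  have \<rho>_nonneg: "\<rho> z \<ge> 0" for z by (simp add: \<rho>_def marginals_ratio_nonneg)
  have pointwise: "ennreal (((sqrt (\<rho> z) + 1) * h z)\<^sup>2) \<le> 2 * (ennreal (\<rho> z) * ennreal ((h z)\<^sup>2) + ennreal ((h z)\<^sup>2))" for z
  proof -
    have "(sqrt (\<rho> z) + 1)\<^sup>2 \<le> 2 * (\<rho> z + 1)"
      using \<rho>_nonneg[of z] zero_le_power2[of "sqrt (\<rho> z) - 1"] by (simp add: power2_eq_square algebra_simps)
    then have "(sqrt (\<rho> z) + 1)\<^sup>2 * (h z)\<^sup>2 \<le> 2 * (\<rho> z + 1) * (h z)\<^sup>2"
      by (rule mult_right_mono) simp
    then have "ennreal (((sqrt (\<rho> z) + 1) * h z)\<^sup>2) \<le> ennreal (2 * (\<rho> z * (h z)\<^sup>2 + (h z)\<^sup>2))"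
      by (intro ennreal_leI) (simp only: power_mult_distrib, simp add: algebra_simps)
    also have "\<dots> = 2 * (ennreal (\<rho> z) * ennreal ((h z)\<^sup>2) + ennreal ((h z)\<^sup>2))"
      by (simp add: \<rho>_nonneg ennreal_mult ennreal_plus)
    finally show ?thesis .
  qed
  have P_eq: "measure_pmf P = density (prod_marginals P) (\<lambda>z. ennreal (\<rho> z))"
    unfolding \<rho>_def by (rule measure_pmf_eq_density_prod_marginals)
  have "(\<integral>\<^sup>+z. ennreal (((sqrt (\<rho> z) + 1) * h z)\<^sup>2) \<partial>prod_marginals P)
      \<le> (\<integral>\<^sup>+z. 2 * (ennreal (\<rho> z) * ennreal ((h z)\<^sup>2) + ennreal ((h z)\<^sup>2)) \<partial>prod_marginals P)"
    by (intro nn_integral_mono pointwise)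
  also have "\<dots> = 2 * ((\<integral>\<^sup>+z. ennreal ((h z)\<^sup>2) \<partial>P) + (\<integral>\<^sup>+z. ennreal ((h z)\<^sup>2) \<partial>prod_marginals P))"
    by (simp add: nn_integral_cmult nn_integral_add P_eq nn_integral_density)
  finally show ?thesis .
qed

lemma abs_integral_diff_prod_marginals_le:
  fixes P :: "('a \<times> 'b) pmf" and h :: "'a \<times> 'b \<Rightarrow> real"
  assumes int_P: "integrable P h" and int_R: "integrable (prod_marginals P) h"
    and finite: "mutual_info P \<noteq> \<infinity>" and "B \<ge> 0"
    and sq_P: "(\<integral>\<^sup>+z. ennreal ((h z)\<^sup>2) \<partial>P) \<le> ennreal B"
    and sq_R: "(\<integral>\<^sup>+z. ennreal ((h z)\<^sup>2) \<partial>prod_marginals P) \<le> ennreal B"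
  shows "\<bar>(\<integral>z. h z \<partial>P) - (\<integral>z. h z \<partial>prod_marginals P)\<bar> \<le> 2 * sqrt (enn2real (mutual_info P)) * sqrt B"
proof -
  define I where "I = enn2real (mutual_info P)"
  have "(\<integral>\<^sup>+z. ennreal ((sqrt (marginals_ratio P z) - 1)\<^sup>2) \<partial>prod_marginals P) \<le> ennreal I"
    using nn_integral_hellinger_le_mutual_info[of P] finite by (simp add: I_def ennreal_enn2real_if)
  moreover have "(\<integral>\<^sup>+z. ennreal (((sqrt (marginals_ratio P z) + 1) * h z)\<^sup>2) \<partial>prod_marginals P) \<le> ennreal (4 * B)"
  proof -
    have "2 * ((\<integral>\<^sup>+z. ennreal ((h z)\<^sup>2) \<partial>P) + (\<integral>\<^sup>+z. ennreal ((h z)\<^sup>2) \<partial>prod_marginals P))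
        \<le> 2 * (ennreal B + ennreal B)"
      using sq_P sq_R by (intro mult_left_mono add_mono) auto
    also have "\<dots> = ennreal (4 * B)"
      using \<open>B \<ge> 0\<close> by (simp add: ennreal_mult flip: mult_2)
    finally show ?thesis using nn_integral_sq_sqrt_marginals_ratio_mult_le order_trans by blast
  qed
  ultimately have "\<bar>(\<integral>z. h z \<partial>P) - (\<integral>z. h z \<partial>prod_marginals P)\<bar> \<le> sqrt I * sqrt (4 * B)"
    unfolding integral_diff_prod_marginals_eq[OF int_P int_R] using \<open>B \<ge> 0\<close>
    by (intro abs_integral_mult_le_sqrt) (auto simp: I_def)
  then show ?thesis by (simp add: I_def real_sqrt_mult)
qed

section \<open>Sub-Gaussian tails\<close>

lemma pow4_mul_exp_le:
  fixes L :: real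
  assumes "L \<ge> 2"
  shows "4 ^ k * exp (- (4 ^ k * L)) \<le> exp (- L) * (1 / 4) ^ k"
proof -
  have "(4::real) ^ k * 4 ^ k \<le> exp (4 ^ k - 1) * exp (4 ^ k - 1)"
    using exp_ge_add_one_self[of "4 ^ k - 1 :: real"] by (intro mult_mono) auto
  also have "\<dots> = exp (2 * (4 ^ k - 1))" by (simp flip: exp_add)
  also have "\<dots> \<le> exp ((4 ^ k - 1) * L)"
    using mult_right_mono[OF assms, of "4 ^ k - 1"] by (simp add: mult.commute)
  finally have "(4::real) ^ k * 4 ^ k / exp ((4 ^ k - 1) * L) \<le> 1" by simp
  have "4 ^ k * exp (- (4 ^ k * L)) = exp (- L) * ((4 ^ k * 4 ^ k) / exp ((4 ^ k - 1) * L)) * (1 / 4) ^ k"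
    by (simp add: field_simps exp_diff power_one_over flip: exp_add)
  also have "\<dots> \<le> exp (- L) * 1 * (1 / 4) ^ k"
    using \<open>4 ^ k * 4 ^ k / exp ((4 ^ k - 1) * L) \<le> 1\<close> by (intro mult_right_mono mult_left_mono) auto
  finally show ?thesis by simp
qed

lemma ex_dyadic_shell:
  fixes r T :: real
  assumes "T > 0" "r > T"
  shows "\<exists>k. T * 2 ^ k \<le> r \<and> r < T * 2 ^ Suc k"
proof -
  obtain n where "r / T < 2 ^ n" using real_arch_pow[of 2 "r / T"] by auto
  then have "r < T * 2 ^ Suc n" using assms by (simp add: field_simps)
  then have ex: "\<exists>n. r < T * 2 ^ Suc n" ..
  define k where "k = (LEAST n. r < T * 2 ^ Suc n)"
  have "r < T * 2 ^ Suc k" unfolding k_def using ex by (rule LeastI_ex)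
  moreover have "T * 2 ^ k \<le> r"
  proof (cases k)
    case (Suc j)
    then have "\<not> r < T * 2 ^ Suc j" using not_less_Least[of j "\<lambda>n. r < T * 2 ^ Suc n"] by (simp add: k_def)
    then show ?thesis using Suc by simp
  qed (use assms in simp)
  ultimately show ?thesis by blast
qed

lemma sq_two_power: "((2::real) ^ n)\<^sup>2 = 4 ^ n"
  by (simp add: power2_eq_square flip: power_mult_distrib)

lemma nn_integral_dyadic_shell_le:
  fixes M :: "'a pmf" and X :: "'a \<Rightarrow> real" and c L :: real
  assumes "c > 0" "L \<ge> 2"
    and tail: "\<forall>t\<ge>0. measure_pmf.prob M {x. \<bar>X x\<bar> \<ge> t} \<le> 2 * exp (- t\<^sup>2 / c\<^sup>2)"
  defines "T \<equiv> c * sqrt L"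
  shows "(\<integral>\<^sup>+x. ennreal (T\<^sup>2 * 4 ^ Suc k) * indicator {x. T * 2 ^ k \<le> \<bar>X x\<bar>} x \<partial>M)
    \<le> ennreal (8 * T\<^sup>2 * exp (- L) * (1 / 4) ^ k)"
proof -
  have "T > 0" using assms by (simp add: T_def)
  have "(T * 2 ^ k)\<^sup>2 / c\<^sup>2 = 4 ^ k * L"
    using assms by (simp add: T_def power_mult_distrib sq_two_power)
  then have prob: "measure M {x. T * 2 ^ k \<le> \<bar>X x\<bar>} \<le> 2 * exp (- (4 ^ k * L))"
    using tail[rule_format, of "T * 2 ^ k"] \<open>T > 0\<close> by (simp flip: minus_divide_left)
  have "(\<integral>\<^sup>+x. ennreal (T\<^sup>2 * 4 ^ Suc k) * indicator {x. T * 2 ^ k \<le> \<bar>X x\<bar>} x \<partial>M)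
      = ennreal (T\<^sup>2 * 4 ^ Suc k) * ennreal (measure M {x. T * 2 ^ k \<le> \<bar>X x\<bar>})"
    by (subst nn_integral_cmult_indicator) (simp_all add: measure_pmf.emeasure_eq_measure)
  also have "\<dots> \<le> ennreal (T\<^sup>2 * 4 ^ Suc k) * ennreal (2 * exp (- (4 ^ k * L)))"
    using prob by (intro mult_left_mono ennreal_leI) auto
  also have "\<dots> = ennreal (8 * T\<^sup>2 * (4 ^ k * exp (- (4 ^ k * L))))"
    by (simp add: algebra_simps flip: ennreal_mult)
  also have "\<dots> \<le> ennreal (8 * T\<^sup>2 * exp (- L) * (1 / 4) ^ k)"
    using pow4_mul_exp_le[OF \<open>L \<ge> 2\<close>, of k] by (intro ennreal_leI) (simp add: mult_left_mono)
  finally show ?thesis .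
qed

text \<open>Cover the tail \<open>|X| > T\<close> by the shells \<open>T 2\<^sup>k \<le> |X| < T 2\<^sup>k\<^sup>+\<^sup>1\<close>; the sub-Gaussian bound on the
  shells decays doubly exponentially, so the sum is dominated by its first term.\<close>
lemma subgaussian_truncated_second_moment:
  fixes M :: "'a pmf" and X :: "'a \<Rightarrow> real" and c L :: real
  assumes "c > 0" "L \<ge> 2"
    and tail: "\<forall>t\<ge>0. measure_pmf.prob M {x. \<bar>X x\<bar> \<ge> t} \<le> 2 * exp (- t\<^sup>2 / c\<^sup>2)"
  shows "(\<integral>\<^sup>+x. ennreal ((if \<bar>X x\<bar> \<le> c * sqrt L then 0 else X x)\<^sup>2) \<partial>M) \<le> ennreal (11 * c\<^sup>2 * L * exp (- L))"
proof -
  define T where "T = c * sqrt L"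
  define F where "F k x = ennreal (T\<^sup>2 * 4 ^ Suc k) * indicator {x. T * 2 ^ k \<le> \<bar>X x\<bar>} x" for k x
  define a where "a = 8 * T\<^sup>2 * exp (- L)"
  have "T > 0" using assms by (simp add: T_def)
  have shells: "ennreal ((if \<bar>X x\<bar> \<le> T then 0 else X x)\<^sup>2) \<le> (\<Sum>k. F k x)" for x
  proof (cases "\<bar>X x\<bar> \<le> T")
    case False
    then obtain k where k: "T * 2 ^ k \<le> \<bar>X x\<bar>" "\<bar>X x\<bar> < T * 2 ^ Suc k"
      using ex_dyadic_shell[OF \<open>T > 0\<close>] by force
    have "\<bar>X x\<bar>\<^sup>2 \<le> (T * 2 ^ Suc k)\<^sup>2" using k by (intro power_mono) auto
    also have "\<dots> = T\<^sup>2 * 4 ^ Suc k" by (simp only: power_mult_distrib sq_two_power)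
    finally have "ennreal ((X x)\<^sup>2) \<le> F k x" using k by (simp add: F_def ennreal_leI)
    also have "F k x \<le> (\<Sum>k. F k x)"
      using sum_le_suminf[of "\<lambda>k. F k x" "{k}"] by (simp add: summableI)
    finally show ?thesis using False by simp
  qed simp
  have "(\<integral>\<^sup>+x. ennreal ((if \<bar>X x\<bar> \<le> T then 0 else X x)\<^sup>2) \<partial>M) \<le> (\<Sum>k. \<integral>\<^sup>+x. F k x \<partial>M)"
    using shells by (simp add: nn_integral_mono flip: nn_integral_suminf)
  also have "\<dots> \<le> (\<Sum>k. ennreal (a * (1 / 4) ^ k))"
    using nn_integral_dyadic_shell_le[OF assms] by (intro suminf_le) (auto simp: summableI F_def T_def a_def)
  also have "\<dots> = ennreal (\<Sum>k. a * (1 / 4) ^ k)"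
    by (subst suminf_ennreal2) (auto simp: a_def intro!: summable_mult summable_geometric)
  also have "(\<Sum>k. a * (1 / 4 :: real) ^ k) = a * (4 / 3)"
    using suminf_mult[OF summable_geometric[of "1/4::real"], of a] suminf_geometric[of "1/4::real"] by simp
  also have "\<dots> \<le> ennreal (11 * c\<^sup>2 * L * exp (- L))"
    using assms by (intro ennreal_leI) (simp add: a_def T_def power_mult_distrib)
  finally show ?thesis by (simp add: T_def)
qed

lemma subgaussian_second_moment:
  fixes M :: "'a pmf" and X :: "'a \<Rightarrow> real" and c :: real
  assumes "c > 0"
    and tail: "\<forall>t\<ge>0. measure_pmf.prob M {x. \<bar>X x\<bar> \<ge> t} \<le> 2 * exp (- t\<^sup>2 / c\<^sup>2)"
  shows "(\<integral>\<^sup>+x. ennreal ((X x)\<^sup>2) \<partial>M) \<le> ennreal (8 * c\<^sup>2)"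
proof -
  define T where "T = c * sqrt 2"
  have "(X x)\<^sup>2 \<le> 2 * c\<^sup>2 + (if \<bar>X x\<bar> \<le> T then 0 else X x)\<^sup>2" for x
  proof (cases "\<bar>X x\<bar> \<le> T")
    case True
    then have "\<bar>X x\<bar>\<^sup>2 \<le> T\<^sup>2" by (intro power_mono) auto
    then show ?thesis using True by (simp add: T_def power_mult_distrib)
  qed simp
  then have "(\<integral>\<^sup>+x. ennreal ((X x)\<^sup>2) \<partial>M)
      \<le> (\<integral>\<^sup>+x. ennreal (2 * c\<^sup>2) + ennreal ((if \<bar>X x\<bar> \<le> T then 0 else X x)\<^sup>2) \<partial>M)"
    by (intro nn_integral_mono) (simp flip: ennreal_plus)
  also have "\<dots> = ennreal (2 * c\<^sup>2) + (\<integral>\<^sup>+x. ennreal ((if \<bar>X x\<bar> \<le> T then 0 else X x)\<^sup>2) \<partial>M)"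
    by (simp add: nn_integral_add measure_pmf.emeasure_space_1)
  also have "\<dots> \<le> ennreal (2 * c\<^sup>2) + ennreal (11 * c\<^sup>2 * 2 * exp (- 2))"
    using subgaussian_truncated_second_moment[OF \<open>c > 0\<close> _ tail, of 2] by (intro add_left_mono) (simp add: T_def)
  also have "\<dots> \<le> ennreal (8 * c\<^sup>2)"
  proof -
    have "(4::real) \<le> exp 1 * exp 1"
      using exp_ge_add_one_self[of 1] mult_mono[of 2 "exp 1" 2 "exp (1::real)"] by simp
    then have "exp (- 2) \<le> (1 / 4 :: real)" by (simp add: exp_minus field_simps flip: exp_add)
    then show ?thesis using \<open>c > 0\<close> by (simp add: mult_left_mono flip: ennreal_plus)
  qed
  finally show ?thesis .
qed

section \<open>Correlation versus mutual information\<close>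

lemma abs_expectation_mult_le_subgaussian:
  fixes M :: "'a pmf" and X Y :: "'a \<Rightarrow> real" and c :: real
  assumes "c > 0"
    and tail: "\<forall>t\<ge>0. measure_pmf.prob M {x. \<bar>X x\<bar> \<ge> t} \<le> 2 * exp (- t\<^sup>2 / c\<^sup>2)"
    and Y: "(\<integral>\<^sup>+x. ennreal ((Y x)\<^sup>2) \<partial>M) \<le> ennreal 1"
  shows "\<bar>\<integral>x. X x * Y x \<partial>M\<bar> \<le> 2 * sqrt 2 * c"
proof -
  have "\<bar>\<integral>x. X x * Y x \<partial>M\<bar> \<le> sqrt (8 * c\<^sup>2) * sqrt 1"
    using subgaussian_second_moment[OF assms(1,2)] Y by (intro abs_integral_mult_le_sqrt) auto
  also have "8 * c\<^sup>2 = (2 * sqrt 2 * c)\<^sup>2" by (simp add: power_mult_distrib)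
  finally show ?thesis using \<open>c > 0\<close> by simp
qed

lemma nn_integral_sq_mult_snd_le:
  fixes f :: "'a \<Rightarrow> real" and M :: "('a \<times> real) pmf"
  assumes "\<And>x. \<bar>f x\<bar> \<le> T"
  shows "(\<integral>\<^sup>+z. ennreal ((f (fst z) * snd z)\<^sup>2) \<partial>M) \<le> ennreal (T\<^sup>2) * (\<integral>\<^sup>+z. ennreal ((snd z)\<^sup>2) \<partial>M)"
proof -
  have "(f x * y)\<^sup>2 \<le> T\<^sup>2 * y\<^sup>2" for x y
    using power_mono[OF assms[of x] abs_ge_zero, of 2] by (simp add: power_mult_distrib mult_right_mono)
  then show ?thesis
    by (subst nn_integral_cmult[symmetric]) (auto intro!: nn_integral_mono ennreal_leI simp flip: ennreal_mult')
qed

definition trunc :: "real \<Rightarrow> real \<Rightarrow> real" where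
  "trunc T x = (if \<bar>x\<bar> \<le> T then x else 0)"

lemma abs_trunc_le: "T \<ge> 0 \<Longrightarrow> \<bar>trunc T x\<bar> \<le> T"
  by (simp add: trunc_def)

lemma diff_trunc: "x - trunc T x = (if \<bar>x\<bar> \<le> T then 0 else x)"
  by (simp add: trunc_def)

lemma integrable_trunc_fst:
  assumes "T \<ge> 0"
  shows "integrable (measure_pmf M) (\<lambda>z. trunc T (fst z))"
  by (rule Bochner_Integration.integrable_bound[of _ "\<lambda>_. T"])
     (use abs_trunc_le[OF assms] assms in \<open>auto intro!: AE_I2\<close>)

lemma integrable_trunc_fst_mult_snd:
  assumes "T \<ge> 0" "integrable (measure_pmf M) (\<lambda>z. snd z)"
  shows "integrable (measure_pmf M) (\<lambda>z. trunc T (fst z) * (snd z :: real))"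
  by (rule Bochner_Integration.integrable_bound[of _ "\<lambda>z. T * snd z"])
     (use abs_trunc_le[OF assms(1)] assms in \<open>auto intro!: AE_I2 mult_right_mono simp: abs_mult\<close>)

lemma has_bochner_integral_prod_marginals_mult:
  fixes P :: "('a \<times> 'b) pmf" and f :: "'a \<Rightarrow> real" and g :: "'b \<Rightarrow> real"
  assumes "integrable P (\<lambda>z. f (fst z))" "integrable P (\<lambda>z. g (snd z))"
  shows "has_bochner_integral (prod_marginals P) (\<lambda>z. f (fst z) * g (snd z))
    ((\<integral>z. f (fst z) \<partial>P) * (\<integral>z. g (snd z) \<partial>P))"
  using assms has_bochner_integral_pair_pmf_mult[of "map_pmf fst P" f "map_pmf snd P" g]
  by (simp add: prod_marginals_def)

text \<open>Under the product of the marginals, \<open>E[trunc T X \<cdot> Y] = E[trunc T X] E[Y] = -E[X - trunc T X] E[Y]\<close>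
  because \<open>E X = 0\<close>.\<close>
lemma abs_integral_prod_marginals_trunc_le:
  fixes P :: "(real \<times> real) pmf"
  assumes "T \<ge> 0" "G \<ge> 0"
    and int_X: "integrable (measure_pmf P) (\<lambda>z. fst z)"
    and mean_X: "measure_pmf.expectation P (\<lambda>z. fst z) = 0"
    and int_Y: "integrable (measure_pmf P) (\<lambda>z. snd z)"
    and Y_sq: "(\<integral>\<^sup>+z. ennreal ((snd z)\<^sup>2) \<partial>P) \<le> ennreal 1"
    and tail: "(\<integral>\<^sup>+z. ennreal ((if \<bar>fst z\<bar> \<le> T then 0 else fst z)\<^sup>2) \<partial>P) \<le> ennreal G"
  shows "\<bar>\<integral>z. trunc T (fst z) * snd z \<partial>prod_marginals P\<bar> \<le> sqrt G"
proof -
  have int_tX: "integrable P (\<lambda>z. trunc T (fst z))" using \<open>T \<ge> 0\<close> by (rule integrable_trunc_fst)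
  have "(\<integral>z. trunc T (fst z) \<partial>P) = - (\<integral>z. fst z - trunc T (fst z) \<partial>P)"
    using int_X int_tX mean_X by (simp add: Bochner_Integration.integral_diff)
  then have "\<bar>\<integral>z. trunc T (fst z) * snd z \<partial>prod_marginals P\<bar>
      = \<bar>\<integral>z. fst z - trunc T (fst z) \<partial>P\<bar> * \<bar>\<integral>z. snd z \<partial>P\<bar>"
    using has_bochner_integral_prod_marginals_mult[OF int_tX int_Y]
    by (simp add: has_bochner_integral_iff abs_mult)
  also have "\<dots> \<le> sqrt G * 1"
  proof (intro mult_mono)
    show "\<bar>\<integral>z. fst z - trunc T (fst z) \<partial>P\<bar> \<le> sqrt G"
      using abs_integral_mult_le_sqrt[OF _ _ tail, of "\<lambda>_. 1" 1] \<open>G \<ge> 0\<close> by (simp add: diff_trunc)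
    show "\<bar>\<integral>z. snd z \<partial>P\<bar> \<le> 1"
      using abs_integral_mult_le_sqrt[OF _ _ Y_sq, of "\<lambda>_. 1" 1] by simp
  qed (use \<open>G \<ge> 0\<close> in auto)
  finally show ?thesis by simp
qed

text \<open>Write \<open>XY = trunc T X \<cdot> Y + (X - trunc T X) Y\<close>.  The decoupling bound compares the first
  term with its value under the product of the marginals; the second is small by Cauchy-Schwarz.\<close>
lemma correlation_le_mutual_info_truncated:
  fixes P :: "(real \<times> real) pmf" and T G \<beta> :: real
  assumes "T > 0" "G \<ge> 0" and finite: "mutual_info P \<noteq> \<infinity>"
    and int_X: "integrable (measure_pmf P) (\<lambda>z. fst z)"
    and mean_X: "measure_pmf.expectation P (\<lambda>z. fst z) = 0"
    and int_YY: "integrable (measure_pmf P) (\<lambda>z. (snd z)\<^sup>2)"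
    and var_Y: "measure_pmf.expectation P (\<lambda>z. (snd z)\<^sup>2) \<le> 1"
    and int_XY: "integrable (measure_pmf P) (\<lambda>z. fst z * snd z)"
    and corr: "measure_pmf.expectation P (\<lambda>z. fst z * snd z) = \<beta>"
    and tail: "(\<integral>\<^sup>+z. ennreal ((if \<bar>fst z\<bar> \<le> T then 0 else fst z)\<^sup>2) \<partial>P) \<le> ennreal G"
  shows "\<beta> \<le> 2 * T * sqrt (enn2real (mutual_info P)) + 2 * sqrt G"
proof -
  define h where "h z = trunc T (fst z) * snd z" for z :: "real \<times> real"
  have Y_sq: "(\<integral>\<^sup>+z. ennreal ((snd z)\<^sup>2) \<partial>P) \<le> ennreal 1"
    using int_YY zero_le_power2 var_Y by (rule nn_integral_le_of_integral_le)
  have int_Y: "integrable P (\<lambda>z. snd z)"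
    using measure_pmf.square_integrable_imp_integrable[OF _ int_YY] by simp
  have int_h: "integrable P h"
    unfolding h_def using \<open>T > 0\<close> int_Y by (intro integrable_trunc_fst_mult_snd) auto
  have int_h_R: "integrable (prod_marginals P) h"
    unfolding h_def using has_bochner_integral_prod_marginals_mult[OF integrable_trunc_fst int_Y] \<open>T > 0\<close>
    by (auto simp: has_bochner_integral_iff)
  have tail_XY: "(\<lambda>z. (fst z - trunc T (fst z)) * snd z) = (\<lambda>z. fst z * snd z - h z)"
    by (simp add: h_def algebra_simps)
  have \<beta>_split: "\<beta> = (\<integral>z. h z \<partial>P) + (\<integral>z. (fst z - trunc T (fst z)) * snd z \<partial>P)"
    using corr int_h int_XY by (simp add: tail_XY)
  have "\<bar>\<integral>z. (fst z - trunc T (fst z)) * snd z \<partial>P\<bar> \<le> sqrt G"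
    using abs_integral_mult_le_sqrt[OF _ _ _ Y_sq \<open>G \<ge> 0\<close>, of "\<lambda>z. fst z - trunc T (fst z)"] tail
    by (simp add: diff_trunc)
  moreover have "\<bar>\<integral>z. h z \<partial>prod_marginals P\<bar> \<le> sqrt G"
    unfolding h_def using \<open>T > 0\<close> \<open>G \<ge> 0\<close> int_X mean_X int_Y Y_sq tail
    by (intro abs_integral_prod_marginals_trunc_le) auto
  moreover have "\<bar>(\<integral>z. h z \<partial>P) - (\<integral>z. h z \<partial>prod_marginals P)\<bar> \<le> 2 * sqrt (enn2real (mutual_info P)) * sqrt (T\<^sup>2)"
  proof (rule abs_integral_diff_prod_marginals_le[OF int_h int_h_R finite zero_le_power2])
    have h_sq: "(\<integral>\<^sup>+z. ennreal ((h z)\<^sup>2) \<partial>M) \<le> ennreal (T\<^sup>2)"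
      if "(\<integral>\<^sup>+z. ennreal ((snd z)\<^sup>2) \<partial>M) \<le> ennreal 1" for M :: "(real \<times> real) pmf"
      using nn_integral_sq_mult_snd_le[where f = "trunc T" and M = M, OF abs_trunc_le] \<open>T > 0\<close>
        mult_left_mono[OF that, of "ennreal (T\<^sup>2)"]
      by (simp add: h_def)
    show "(\<integral>\<^sup>+z. ennreal ((h z)\<^sup>2) \<partial>P) \<le> ennreal (T\<^sup>2)" using Y_sq by (rule h_sq)
    show "(\<integral>\<^sup>+z. ennreal ((h z)\<^sup>2) \<partial>prod_marginals P) \<le> ennreal (T\<^sup>2)"
      using Y_sq nn_integral_prod_marginals_snd[of P "\<lambda>y. ennreal (y\<^sup>2)"] by (intro h_sq) simp
  qed
  ultimately show ?thesis
    using \<beta>_split \<open>T > 0\<close> by (simp add: algebra_simps)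
qed

lemma truncation_error_at_log_scale:
  fixes c \<beta> :: real
  assumes "c > 0" "\<beta> > 0"
  defines "\<Lambda> \<equiv> ln (2^20 * c\<^sup>2 / \<beta>\<^sup>2)"
  shows "11 * c\<^sup>2 * (2 * \<Lambda>) * exp (- (2 * \<Lambda>)) \<le> (\<beta> / 4)\<^sup>2"
proof -
  define A where "A = 2^20 * c\<^sup>2 / \<beta>\<^sup>2"
  have "A > 0" using assms by (simp add: A_def)
  have "exp \<Lambda> = A" using \<open>A > 0\<close> by (simp add: \<Lambda>_def A_def)
  moreover have "exp (2 * \<Lambda>) = exp \<Lambda> * exp \<Lambda>" by (simp flip: exp_add)
  ultimately have "exp (2 * \<Lambda>) = A\<^sup>2" by (simp add: power2_eq_square)
  then have "11 * c\<^sup>2 * (2 * \<Lambda>) * exp (- (2 * \<Lambda>)) = 22 * c\<^sup>2 * \<Lambda> / A\<^sup>2"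
    by (simp add: exp_minus field_simps)
  also have "\<dots> \<le> 22 * c\<^sup>2 * A / A\<^sup>2"
    using ln_le_minus_one[OF \<open>A > 0\<close>] by (intro divide_right_mono mult_left_mono) (auto simp: \<Lambda>_def A_def)
  also have "\<dots> = 22 * \<beta>\<^sup>2 / 2^20"
    using assms by (simp add: A_def power2_eq_square field_simps)
  also have "\<dots> \<le> (\<beta> / 4)\<^sup>2" by (simp add: power_divide)
  finally show ?thesis .
qed

lemma log_scale_ge_one:
  fixes c \<beta> :: real
  assumes "c > 0" "\<beta> > 0" "\<beta> \<le> 2 * sqrt 2 * c"
  shows "1 \<le> ln (2^20 * c\<^sup>2 / \<beta>\<^sup>2)"
proof -
  have "\<beta>\<^sup>2 \<le> 8 * c\<^sup>2"
    using power_mono[OF assms(3), of 2] \<open>\<beta> > 0\<close> by (simp add: power_mult_distrib)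
  then have "exp 1 * \<beta>\<^sup>2 \<le> 3 * (8 * c\<^sup>2)"
    using exp_le by (intro mult_mono) auto
  also have "\<dots> \<le> 2^20 * c\<^sup>2" by simp
  finally have "exp 1 \<le> 2^20 * c\<^sup>2 / \<beta>\<^sup>2"
    using \<open>\<beta> > 0\<close> by (simp add: pos_le_divide_eq)
  then show ?thesis using assms by (simp add: ln_ge_iff)
qed

lemma sqrt_mutual_info_ge:
  fixes P :: "(real \<times> real) pmf" and \<beta> c :: real
  assumes "c > 0" "\<beta> > 0" and finite: "mutual_info P \<noteq> \<infinity>"
    and int_X: "integrable (measure_pmf P) (\<lambda>z. fst z)"
    and mean_X: "measure_pmf.expectation P (\<lambda>z. fst z) = 0"
    and int_YY: "integrable (measure_pmf P) (\<lambda>z. (snd z)\<^sup>2)"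
    and var_Y: "measure_pmf.expectation P (\<lambda>z. (snd z)\<^sup>2) \<le> 1"
    and int_XY: "integrable (measure_pmf P) (\<lambda>z. fst z * snd z)"
    and corr: "measure_pmf.expectation P (\<lambda>z. fst z * snd z) = \<beta>"
    and tail: "\<forall>t\<ge>0. measure_pmf.prob P {z. \<bar>fst z\<bar> \<ge> t} \<le> 2 * exp (- t\<^sup>2 / c\<^sup>2)"
  shows "1/16 * \<beta>\<^sup>2 / (c\<^sup>2 * ln (2^20 * c\<^sup>2 / \<beta>\<^sup>2)) \<le> sqrt (enn2real (mutual_info P))"
proof -
  define \<Lambda> where "\<Lambda> = ln (2^20 * c\<^sup>2 / \<beta>\<^sup>2)"
  define q where "q = sqrt (enn2real (mutual_info P))"
  have "\<beta> \<le> 2 * sqrt 2 * c"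
    using abs_expectation_mult_le_subgaussian[OF \<open>c > 0\<close> tail nn_integral_le_of_integral_le[OF int_YY zero_le_power2 var_Y]] corr
    by simp
  then have "\<Lambda> \<ge> 1" unfolding \<Lambda>_def using \<open>c > 0\<close> \<open>\<beta> > 0\<close> by (intro log_scale_ge_one)
  then have "sqrt \<Lambda> \<le> \<Lambda>"
    using mult_right_mono[OF \<open>\<Lambda> \<ge> 1\<close>, of \<Lambda>] by (intro real_le_lsqrt) (auto simp: power2_eq_square)
  define T where "T = c * sqrt (2 * \<Lambda>)"
  have "T > 0" using \<open>c > 0\<close> \<open>\<Lambda> \<ge> 1\<close> by (simp add: T_def)
  have "(\<integral>\<^sup>+z. ennreal ((if \<bar>fst z\<bar> \<le> T then 0 else fst z)\<^sup>2) \<partial>P)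
      \<le> ennreal (11 * c\<^sup>2 * (2 * \<Lambda>) * exp (- (2 * \<Lambda>)))"
    unfolding T_def using \<open>\<Lambda> \<ge> 1\<close> by (intro subgaussian_truncated_second_moment[OF \<open>c > 0\<close> _ tail]) simp
  then have "\<beta> \<le> 2 * T * q + 2 * sqrt (11 * c\<^sup>2 * (2 * \<Lambda>) * exp (- (2 * \<Lambda>)))"
    unfolding q_def using \<open>T > 0\<close> \<open>\<Lambda> \<ge> 1\<close>
    by (intro correlation_le_mutual_info_truncated[OF _ _ finite int_X mean_X int_YY var_Y int_XY corr]) auto
  also have "sqrt (11 * c\<^sup>2 * (2 * \<Lambda>) * exp (- (2 * \<Lambda>))) \<le> \<beta> / 4"
    using real_sqrt_le_mono[OF truncation_error_at_log_scale[OF \<open>c > 0\<close> \<open>\<beta> > 0\<close>]] \<open>\<beta> > 0\<close>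
    by (simp add: \<Lambda>_def)
  finally have "\<beta> \<le> 4 * sqrt 2 * c * sqrt \<Lambda> * q"
    by (simp add: T_def real_sqrt_mult algebra_simps)
  then have "\<beta> * \<beta> \<le> (4 * sqrt 2 * c * sqrt \<Lambda> * q) * (2 * sqrt 2 * c)"
    using \<open>\<beta> \<le> 2 * sqrt 2 * c\<close> \<open>\<beta> > 0\<close> \<open>c > 0\<close> \<open>\<Lambda> \<ge> 1\<close> by (intro mult_mono) (auto simp: q_def)
  also have "\<dots> = 16 * c\<^sup>2 * sqrt \<Lambda> * q" by (simp add: power2_eq_square)
  also have "\<dots> \<le> 16 * c\<^sup>2 * \<Lambda> * q"
    using \<open>sqrt \<Lambda> \<le> \<Lambda>\<close> by (intro mult_right_mono mult_left_mono) (auto simp: q_def)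
  finally show ?thesis
    using \<open>c > 0\<close> \<open>\<Lambda> \<ge> 1\<close> by (simp add: \<Lambda>_def q_def field_simps power2_eq_square)
qed

theorem lemma2:
  "\<exists>C::real. C > 0 \<and>
     (\<forall>(P :: (real \<times> real) pmf) (\<beta>::real) (c::real).
        c > 0 \<longrightarrow> \<beta> > 0 \<longrightarrow>
        integrable (measure_pmf P) (\<lambda>z. fst z) \<longrightarrow>
        measure_pmf.expectation P (\<lambda>z. fst z) = 0 \<longrightarrow>
        integrable (measure_pmf P) (\<lambda>z. (snd z)\<^sup>2) \<longrightarrow>
        measure_pmf.expectation P (\<lambda>z. (snd z)\<^sup>2) \<le> 1 \<longrightarrow>
        integrable (measure_pmf P) (\<lambda>z. fst z * snd z) \<longrightarrow>
        measure_pmf.expectation P (\<lambda>z. fst z * snd z) = \<beta> \<longrightarrow>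
        (\<forall>t\<ge>0. measure_pmf.prob P {z. \<bar>fst z\<bar> \<ge> t} \<le> 2 * exp (- t\<^sup>2 / c\<^sup>2)) \<longrightarrow>
        (mutual_info P = \<infinity> \<or>
         sqrt (enn2real (mutual_info P)) \<ge> C * \<beta>\<^sup>2 / (c\<^sup>2 * ln (2^20 * c\<^sup>2 / \<beta>\<^sup>2))))"
  using sqrt_mutual_info_ge by (intro exI[of _ "1/16"]) auto

end
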